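(* For any valued field $K$ the following are equivalent: (1) for every $d\ge 1$, every set $X\subseteq K^d$ that is closed under 2-element convex combinations (i.e. $\alpha x+\beta y\in X$ whenever $x,y\in X$, $\alpha,\beta\in\mathcal{O}$, $\alpha+\beta=1$) is convex; (2) the residue field $k$ is not isomorphic to $\mathbb{F}_2$.
   Context: $K$ is a field with a valuation $\nu:K\to\Gamma\cup\{\infty\}$, valuation ring $\mathcal{O}=\{x:\nu(x)\ge 0\}$, maximal ideal $\mathfrak{m}=\{x:\nu(x)>0\}$ and residue field $k=\mathcal{O}/\mathfrak{m}$. A set $X\subseteq K^d$ is convex if for every $n\ge 1$, all $x_1,\dots,x_n\in X$ and all $\alpha_1,\dots,\alpha_n\in\mathcal{O}$ with $\alpha_1+\dots+\alpha_n=1$, we have $\alpha_1x_1+\dots+\alpha_nx_n\in X$. *)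

theory Defs
  imports Main "HOL-Algebra.QuotRing" "HOL-Number_Theory.Residues"
begin

text \<open>The value at 0 is \<infinity>; we record the valuation only on nonzero elements,
  so that \<nu>(0) = \<infinity> is implicit: the axioms are \<nu>(xy) = \<nu>x + \<nu>y and
  \<nu>(x+y) \<ge> min(\<nu>x, \<nu>y), read with the convention \<nu>(0) = \<infinity>.\<close>
definition valuation :: "('a::field \<Rightarrow> 'g::linordered_ab_group_add) \<Rightarrow> bool" where
  "valuation \<nu> \<longleftrightarrow>
     (\<forall>x y. x \<noteq> 0 \<longrightarrow> y \<noteq> 0 \<longrightarrow> \<nu> (x * y) = \<nu> x + \<nu> y) \<and>
     (\<forall>x y. x \<noteq> 0 \<longrightarrow> y \<noteq> 0 \<longrightarrow> x + y \<noteq> 0 \<longrightarrow> min (\<nu> x) (\<nu> y) \<le> \<nu> (x + y))"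

definition val_ring :: "('a::field \<Rightarrow> 'g::linordered_ab_group_add) \<Rightarrow> 'a set" where
  "val_ring \<nu> = {x. x = 0 \<or> 0 \<le> \<nu> x}"

definition val_max_ideal :: "('a::field \<Rightarrow> 'g::linordered_ab_group_add) \<Rightarrow> 'a set" where
  "val_max_ideal \<nu> = {x. x = 0 \<or> 0 < \<nu> x}"

definition val_ring_alg :: "('a::field \<Rightarrow> 'g::linordered_ab_group_add) \<Rightarrow> 'a ring" where
  "val_ring_alg \<nu> = \<lparr>carrier = val_ring \<nu>, monoid.mult = (*), one = 1, zero = 0, add = (+)\<rparr>"

definition residue_field :: "('a::field \<Rightarrow> 'g::linordered_ab_group_add) \<Rightarrow> 'a set ring" where
  "residue_field \<nu> = val_ring_alg \<nu> Quot val_max_ideal \<nu>"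

definition Kpow :: "nat \<Rightarrow> (nat \<Rightarrow> 'a::field) set" where
  "Kpow d = {x. \<forall>i\<ge>d. x i = 0}"

definition convex_val :: "('a::field \<Rightarrow> 'g::linordered_ab_group_add) \<Rightarrow> (nat \<Rightarrow> 'a) set \<Rightarrow> bool" where
  "convex_val \<nu> X \<longleftrightarrow>
     (\<forall>n::nat. \<forall>x::nat \<Rightarrow> nat \<Rightarrow> 'a. \<forall>\<alpha>::nat \<Rightarrow> 'a.
        n \<ge> 1 \<longrightarrow> (\<forall>j<n. x j \<in> X \<and> \<alpha> j \<in> val_ring \<nu>) \<longrightarrow> (\<Sum>j<n. \<alpha> j) = 1 \<longrightarrow>
        (\<lambda>i. \<Sum>j<n. \<alpha> j * x j i) \<in> X)"

definition convex2_val :: "('a::field \<Rightarrow> 'g::linordered_ab_group_add) \<Rightarrow> (nat \<Rightarrow> 'a) set \<Rightarrow> bool" where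
  "convex2_val \<nu> X \<longleftrightarrow>
     (\<forall>x\<in>X. \<forall>y\<in>X. \<forall>a\<in>val_ring \<nu>. \<forall>b\<in>val_ring \<nu>. a + b = 1 \<longrightarrow>
        (\<lambda>i. a * x i + b * y i) \<in> X)"

end

theory Submission imports Defs begin

text \<open>Call \<open>u \<in> \<O>\<close> a unit if \<open>u \<notin> \<mm>\<close>. If some \<open>l\<close> has both \<open>l\<close> and \<open>1 - l\<close> units, an
  \<open>(n+1)\<close>-term combination reduces to an \<open>n\<close>-term and a two-term one: when \<open>1 - \<alpha>\<^sub>n\<close> is a
  unit, rescale the other weights by it and peel off \<open>x\<^sub>n\<close>; when \<open>\<alpha>\<^sub>n \<equiv> 1 (mod \<mm>)\<close>, first
  replace \<open>x\<^sub>n\<close> by the point \<open>l x\<^sub>n + (1 - l) x\<^sub>n\<^sub>-\<^sub>1\<close> with weight \<open>\<alpha>\<^sub>n / l \<equiv> 1 / l\<close>, which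
  is not \<open>\<equiv> 1\<close>. Such an \<open>l\<close> exists exactly when \<open>k \<noteq> \<bbbF>\<^sub>2\<close>. Over \<open>k = \<bbbF>\<^sub>2\<close>, of two
  weights summing to 1 one lies in \<open>\<mm>\<close> and the other is \<open>\<equiv> 1\<close>, so the points of \<open>\<O>\<^sup>2\<close> with
  residue \<open>(0,0), (1,0), (0,1)\<close> are closed under two-term combinations, while
  \<open>(1,0) + (0,1) - (0,0)\<close> leaves the set.\<close>

locale valued_field =
  fixes \<nu> :: "'a::field \<Rightarrow> 'g::linordered_ab_group_add"
  assumes valuation: "valuation \<nu>"
begin

abbreviation "\<O> \<equiv> val_ring \<nu>"
abbreviation "\<mm> \<equiv> val_max_ideal \<nu>"

lemma val_mult: "x \<noteq> 0 \<Longrightarrow> y \<noteq> 0 \<Longrightarrow> \<nu> (x * y) = \<nu> x + \<nu> y"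
  using valuation unfolding valuation_def by blast

lemma val_add_ge_min: "x \<noteq> 0 \<Longrightarrow> y \<noteq> 0 \<Longrightarrow> x + y \<noteq> 0 \<Longrightarrow> min (\<nu> x) (\<nu> y) \<le> \<nu> (x + y)"
  using valuation unfolding valuation_def by blast

lemma val_one [simp]: "\<nu> 1 = 0"
  using val_mult[of 1 1] by simp

lemma val_minus: "\<nu> (- x) = \<nu> x"
proof -
  have "\<nu> (-1) + \<nu> (-1) = 0"
    using val_mult[of "-1" "-1"] by simp
  then have "\<nu> (-1) = 0"
    by simp
  then show ?thesis
    using val_mult[of "-1" x] by (cases "x = 0") simp_all
qed

lemma val_inverse: "x \<noteq> 0 \<Longrightarrow> \<nu> (inverse x) = - \<nu> x"
  using val_mult[of x "inverse x"] by (simp add: eq_neg_iff_add_eq_0 add.commute)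

lemma zero_in_val_ring [simp]: "0 \<in> \<O>"
  and one_in_val_ring [simp]: "1 \<in> \<O>"
  and zero_in_val_max_ideal [simp]: "0 \<in> \<mm>"
  and one_notin_val_max_ideal [simp]: "1 \<notin> \<mm>"
  by (simp_all add: val_ring_def val_max_ideal_def)

lemma val_max_ideal_subset: "x \<in> \<mm> \<Longrightarrow> x \<in> \<O>"
  by (auto simp: val_ring_def val_max_ideal_def)

lemma val_ring_add: "x \<in> \<O> \<Longrightarrow> y \<in> \<O> \<Longrightarrow> x + y \<in> \<O>"
  unfolding val_ring_def using val_add_ge_min[of x y] by (fastforce simp: min_def split: if_splits)

lemma val_max_ideal_add: "x \<in> \<mm> \<Longrightarrow> y \<in> \<mm> \<Longrightarrow> x + y \<in> \<mm>"
  unfolding val_max_ideal_def using val_add_ge_min[of x y] by (fastforce simp: min_def split: if_splits)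

lemma val_ring_uminus: "x \<in> \<O> \<Longrightarrow> - x \<in> \<O>"
  by (simp add: val_ring_def val_minus)

lemma val_max_ideal_uminus: "x \<in> \<mm> \<Longrightarrow> - x \<in> \<mm>"
  by (simp add: val_max_ideal_def val_minus)

lemma val_ring_diff: "x \<in> \<O> \<Longrightarrow> y \<in> \<O> \<Longrightarrow> x - y \<in> \<O>"
  using val_ring_add val_ring_uminus by (metis diff_conv_add_uminus)

lemma val_max_ideal_diff: "x \<in> \<mm> \<Longrightarrow> y \<in> \<mm> \<Longrightarrow> x - y \<in> \<mm>"
  using val_max_ideal_add val_max_ideal_uminus by (metis diff_conv_add_uminus)

lemma val_ring_mult: "x \<in> \<O> \<Longrightarrow> y \<in> \<O> \<Longrightarrow> x * y \<in> \<O>"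
  unfolding val_ring_def using val_mult[of x y] by (cases "x = 0"; cases "y = 0") auto

lemma val_max_ideal_mult: "x \<in> \<O> \<Longrightarrow> y \<in> \<mm> \<Longrightarrow> x * y \<in> \<mm>"
  unfolding val_ring_def val_max_ideal_def using val_mult[of x y]
  by (cases "x = 0"; cases "y = 0") (auto simp: add_nonneg_pos)

lemma val_max_ideal_mult_iff:
  assumes "x \<in> \<O>" "y \<in> \<O>"
  shows "x * y \<in> \<mm> \<longleftrightarrow> x \<in> \<mm> \<or> y \<in> \<mm>"
proof (cases "x = 0 \<or> y = 0")
  case False
  then have "0 \<le> \<nu> x" "0 \<le> \<nu> y" "\<nu> (x * y) = \<nu> x + \<nu> y"
    using assms val_mult unfolding val_ring_def by auto
  then show ?thesis
    using False unfolding val_max_ideal_def by (auto simp: add_nonneg_pos add_pos_nonneg)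
qed auto

lemma val_max_ideal_add_iff: "u \<in> \<mm> \<Longrightarrow> w \<in> \<O> \<Longrightarrow> u + w \<in> \<mm> \<longleftrightarrow> w \<in> \<mm>"
  using val_max_ideal_add val_max_ideal_diff by (metis add_diff_cancel_left')

lemma val_ring_divide: "x \<in> \<O> \<Longrightarrow> c \<in> \<O> \<Longrightarrow> c \<notin> \<mm> \<Longrightarrow> x / c \<in> \<O>"
  unfolding val_ring_def val_max_ideal_def using val_mult[of x "inverse c"] val_inverse[of c]
  by (cases "x = 0"; cases "c = 0"; auto simp: divide_inverse)

lemma divide_notin_val_max_ideal:
  "x \<in> \<O> \<Longrightarrow> x \<notin> \<mm> \<Longrightarrow> c \<in> \<O> \<Longrightarrow> c \<notin> \<mm> \<Longrightarrow> x / c \<notin> \<mm>"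
  unfolding val_ring_def val_max_ideal_def using val_mult[of x "inverse c"] val_inverse[of c]
  by (cases "x = 0"; cases "c = 0"; auto simp: divide_inverse)

lemma val_max_ideal_add_iff_if_binary_residues:
  assumes binary: "\<forall>a\<in>\<O>. a \<in> \<mm> \<or> 1 - a \<in> \<mm>" and "x \<in> \<O>" "y \<in> \<O>"
  shows "x + y \<in> \<mm> \<longleftrightarrow> (x \<in> \<mm> \<longleftrightarrow> y \<in> \<mm>)"
proof (cases "x \<in> \<mm> \<or> y \<in> \<mm>")
  case True
  then show ?thesis
    using val_max_ideal_add_iff assms by (metis add.commute)
next
  case False
  then have "1 - x \<in> \<mm>" "1 - y \<in> \<mm>"
    using binary assms by auto
  have "(2::'a) \<in> \<O>"
    using val_ring_add[OF one_in_val_ring one_in_val_ring] by (simp add: one_add_one)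
  moreover have "1 - 2 \<notin> \<mm>"
    using val_max_ideal_uminus[of "1 - 2"] by auto
  ultimately have "2 \<in> \<mm>"
    using binary by blast
  then have "2 - (1 - x) - (1 - y) \<in> \<mm>"
    using \<open>1 - x \<in> \<mm>\<close> \<open>1 - y \<in> \<mm>\<close> by (blast intro: val_max_ideal_diff)
  then show ?thesis
    using False by (simp add: algebra_simps)
qed

lemma ring_val_ring_alg: "ring (val_ring_alg \<nu>)"
proof (rule ringI)
  show "abelian_group (val_ring_alg \<nu>)"
  proof (rule abelian_groupI)
    fix x assume "x \<in> carrier (val_ring_alg \<nu>)"
    then have "-x \<in> carrier (val_ring_alg \<nu>)" "-x \<oplus>\<^bsub>val_ring_alg \<nu>\<^esub> x = \<zero>\<^bsub>val_ring_alg \<nu>\<^esub>"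
      unfolding val_ring_alg_def using val_ring_uminus by auto
    then show "\<exists>y\<in>carrier (val_ring_alg \<nu>). y \<oplus>\<^bsub>val_ring_alg \<nu>\<^esub> x = \<zero>\<^bsub>val_ring_alg \<nu>\<^esub>"
      by blast
  qed (auto simp: val_ring_alg_def val_ring_add)
  show "monoid (val_ring_alg \<nu>)"
    by (rule monoidI) (auto simp: val_ring_alg_def val_ring_mult)
qed (auto simp: val_ring_alg_def algebra_simps)

lemma carrier_residue_field: "carrier (residue_field \<nu>) = {(\<lambda>i. i + a) ` \<mm> | a. a \<in> \<O>}"
  unfolding residue_field_def FactRing_def A_RCOSETS_defs val_ring_alg_def r_coset_def
  by (auto simp: UNION_singleton_eq_range)

lemma binary_residues_if_iso_Z2:
  assumes "residue_field \<nu> \<simeq> residue_ring 2"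
  shows "\<forall>a\<in>\<O>. a \<in> \<mm> \<or> 1 - a \<in> \<mm>"
proof
  fix a assume "a \<in> \<O>"
  define C where "C b = (\<lambda>i. i + b) ` \<mm>" for b
  have mem_C: "b \<in> C b" for b
    unfolding C_def by (rule image_eqI[of _ _ 0]) simp_all
  have C_0: "C 0 = \<mm>"
    unfolding C_def by simp
  have "card (carrier (residue_field \<nu>)) = 2"
    using ring_iso_same_card[OF assms] by (simp add: residue_ring_def)
  then obtain P Q where PQ: "carrier (residue_field \<nu>) = {P, Q}"
    unfolding card_2_iff by blast
  have "C b \<in> {P, Q}" if "b \<in> \<O>" for b
    unfolding PQ[symmetric] carrier_residue_field C_def using that by blast
  moreover have "C 1 \<noteq> C 0"
    using mem_C[of 1] C_0 by auto
  ultimately have "C a = C 0 \<or> C a = C 1"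
    using \<open>a \<in> \<O>\<close> zero_in_val_ring one_in_val_ring by blast
  then show "a \<in> \<mm> \<or> 1 - a \<in> \<mm>"
  proof
    assume "C a = C 1"
    then obtain i where "i \<in> \<mm>" "a = i + 1"
      using mem_C[of a] unfolding C_def by auto
    then show ?thesis
      using val_max_ideal_uminus[of i] by simp
  qed (use mem_C[of a] C_0 in simp)
qed

lemma iso_Z2_if_binary_residues:
  assumes binary: "\<forall>a\<in>\<O>. a \<in> \<mm> \<or> 1 - a \<in> \<mm>"
  shows "residue_field \<nu> \<simeq> residue_ring 2"
proof -
  interpret Z2: residues 2 "residue_ring 2"
    by unfold_locales simp
  define h where "h a = (if a \<in> \<mm> then 0 else 1::int)" for a
  have "h \<in> ring_hom (val_ring_alg \<nu>) (residue_ring 2)"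
  proof (rule ring_hom_memI)
    fix x y assume "x \<in> carrier (val_ring_alg \<nu>)" "y \<in> carrier (val_ring_alg \<nu>)"
    then have "x \<in> \<O>" "y \<in> \<O>"
      unfolding val_ring_alg_def by simp_all
    then show "h (x \<otimes>\<^bsub>val_ring_alg \<nu>\<^esub> y) = h x \<otimes>\<^bsub>residue_ring 2\<^esub> h y"
      and "h (x \<oplus>\<^bsub>val_ring_alg \<nu>\<^esub> y) = h x \<oplus>\<^bsub>residue_ring 2\<^esub> h y"
      unfolding h_def residue_ring_def val_ring_alg_def
      using val_max_ideal_mult_iff val_max_ideal_add_iff_if_binary_residues[OF binary] by simp_all
  qed (auto simp: h_def residue_ring_def val_ring_alg_def)
  then interpret h: ring_hom_ring "val_ring_alg \<nu>" "residue_ring 2" h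
    using ring_hom_ringI2 ring_val_ring_alg Z2.cring cring.axioms(1) by blast
  have "carrier (residue_ring 2) = {0, 1}" "h ` carrier (val_ring_alg \<nu>) \<subseteq> {0, 1}"
    "h 0 = 0" "h 1 = 1" "0 \<in> carrier (val_ring_alg \<nu>)" "1 \<in> carrier (val_ring_alg \<nu>)"
    by (auto simp: residue_ring_def h_def val_ring_alg_def)
  then have "h ` carrier (val_ring_alg \<nu>) = carrier (residue_ring 2)"
    by (simp add: subset_antisym image_eqI)
  moreover have "a_kernel (val_ring_alg \<nu>) (residue_ring 2) h = \<mm>"
    unfolding a_kernel_def kernel_def h_def residue_ring_def val_ring_alg_def
    using val_max_ideal_subset by auto
  ultimately show ?thesis
    using h.FactRing_iso unfolding residue_field_def by metis
qed

lemma residue_field_iso_Z2_iff: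
  "residue_field \<nu> \<simeq> residue_ring 2 \<longleftrightarrow> (\<forall>a\<in>\<O>. a \<in> \<mm> \<or> 1 - a \<in> \<mm>)"
  using binary_residues_if_iso_Z2 iso_Z2_if_binary_residues by blast

end

definition combination :: "nat \<Rightarrow> (nat \<Rightarrow> 'a::comm_ring_1) \<Rightarrow> (nat \<Rightarrow> nat \<Rightarrow> 'a) \<Rightarrow> nat \<Rightarrow> 'a" where
  "combination n \<alpha> x = (\<lambda>i. \<Sum>j<n. \<alpha> j * x j i)"

lemma combination_Suc: "combination (Suc n) \<alpha> x i = combination n \<alpha> x i + \<alpha> n * x n i"
  by (simp add: combination_def)

lemma combination_cong:
  "(\<And>j. j < n \<Longrightarrow> \<alpha> j = \<beta> j \<and> x j = y j) \<Longrightarrow> combination n \<alpha> x = combination n \<beta> y"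
  unfolding combination_def by (auto intro: sum.cong)

lemma combination_rescale:
  fixes \<alpha> :: "nat \<Rightarrow> 'a::field"
  assumes "c \<noteq> 0"
  shows "combination (Suc n) \<alpha> x = (\<lambda>i. c * combination n (\<lambda>j. \<alpha> j / c) x i + \<alpha> n * x n i)"
  using assms by (auto simp: combination_def sum_distrib_left)

lemma combination_shift_weight:
  assumes "\<gamma> * l = \<alpha> (Suc k)"
  shows "combination (Suc (Suc k)) (\<alpha>(k := \<alpha> k - \<gamma> * (1 - l), Suc k := \<gamma>))
           (x(Suc k := (\<lambda>i. l * x (Suc k) i + (1 - l) * x k i))) = combination (Suc (Suc k)) \<alpha> x"
proof
  fix i
  have "combination k (\<alpha>(k := \<alpha> k - \<gamma> * (1 - l), Suc k := \<gamma>))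
          (x(Suc k := (\<lambda>i. l * x (Suc k) i + (1 - l) * x k i))) = combination k \<alpha> x"
    by (rule combination_cong) simp
  then show "combination (Suc (Suc k)) (\<alpha>(k := \<alpha> k - \<gamma> * (1 - l), Suc k := \<gamma>))
      (x(Suc k := (\<lambda>i. l * x (Suc k) i + (1 - l) * x k i))) i = combination (Suc (Suc k)) \<alpha> x i"
    by (simp add: combination_Suc assms[symmetric] algebra_simps)
qed

lemma sum_shift_weight:
  fixes \<alpha> :: "nat \<Rightarrow> 'a::comm_ring_1"
  assumes "\<gamma> * l = \<alpha> (Suc k)"
  shows "(\<Sum>j<Suc (Suc k). (\<alpha>(k := \<alpha> k - \<gamma> * (1 - l), Suc k := \<gamma>)) j) = (\<Sum>j<Suc (Suc k). \<alpha> j)"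
proof -
  have "(\<Sum>j<k. (\<alpha>(k := \<alpha> k - \<gamma> * (1 - l), Suc k := \<gamma>)) j) = (\<Sum>j<k. \<alpha> j)"
    by (rule sum.cong) simp_all
  then show ?thesis
    by (simp add: assms[symmetric] algebra_simps)
qed

context valued_field
begin

lemma convex2_combination_Suc:
  assumes X: "convex2_val \<nu> X"
    and IH: "\<And>\<beta>. \<forall>j<n. \<beta> j \<in> \<O> \<Longrightarrow> (\<Sum>j<n. \<beta> j) = 1 \<Longrightarrow> combination n \<beta> x \<in> X"
    and "x n \<in> X" and \<alpha>: "\<forall>j<Suc n. \<alpha> j \<in> \<O>" "(\<Sum>j<Suc n. \<alpha> j) = 1"
    and unit: "1 - \<alpha> n \<notin> \<mm>"
  shows "combination (Suc n) \<alpha> x \<in> X"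
proof -
  define c where "c = 1 - \<alpha> n"
  have "\<alpha> n \<in> \<O>"
    using \<alpha>(1) by simp
  then have "c \<in> \<O>"
    unfolding c_def by (rule val_ring_diff[OF one_in_val_ring])
  have "c \<noteq> 0" "c + \<alpha> n = 1"
    using unit unfolding c_def by auto
  have "(\<Sum>j<n. \<alpha> j) = c"
    using \<alpha>(2) unfolding c_def by (simp add: algebra_simps)
  then have "(\<Sum>j<n. \<alpha> j / c) = 1"
    using \<open>c \<noteq> 0\<close> by (simp add: sum_divide_distrib[symmetric])
  have "\<forall>j<n. \<alpha> j / c \<in> \<O>"
    using \<alpha>(1) \<open>c \<in> \<O>\<close> unit val_ring_divide unfolding c_def by simp
  then have "combination n (\<lambda>j. \<alpha> j / c) x \<in> X"
    using \<open>(\<Sum>j<n. \<alpha> j / c) = 1\<close> by (rule IH)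
  then have "(\<lambda>i. c * combination n (\<lambda>j. \<alpha> j / c) x i + \<alpha> n * x n i) \<in> X"
    using X \<open>x n \<in> X\<close> \<open>c \<in> \<O>\<close> \<open>\<alpha> n \<in> \<O>\<close> \<open>c + \<alpha> n = 1\<close>
    unfolding convex2_val_def by blast
  then show ?thesis
    using combination_rescale[OF \<open>c \<noteq> 0\<close>] by simp
qed

lemma shifted_weight_unit:
  assumes l: "l \<in> \<O>" "l \<notin> \<mm>" "1 - l \<notin> \<mm>" and a: "a \<in> \<O>" "1 - a \<in> \<mm>"
  shows "a / l \<in> \<O>" "1 - a / l \<notin> \<mm>"
proof -
  show "a / l \<in> \<O>"
    using val_ring_divide a l by blast
  have "l - a \<notin> \<mm>"
  proof
    assume "l - a \<in> \<mm>"
    then have "- ((l - a) - (1 - a)) \<in> \<mm>"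
      using a(2) by (rule val_max_ideal_uminus[OF val_max_ideal_diff])
    then show False
      using l(3) by simp
  qed
  then have "(l - a) / l \<notin> \<mm>"
    using divide_notin_val_max_ideal val_ring_diff a l by blast
  moreover have "(l - a) / l = 1 - a / l"
    using l(2) zero_in_val_max_ideal by (metis diff_divide_distrib divide_self)
  ultimately show "1 - a / l \<notin> \<mm>"
    by simp
qed

lemma convex2_combination:
  assumes X: "convex2_val \<nu> X" and l: "l \<in> \<O>" "l \<notin> \<mm>" "1 - l \<notin> \<mm>"
  shows "\<forall>j<Suc n. x j \<in> X \<and> \<alpha> j \<in> \<O> \<Longrightarrow> (\<Sum>j<Suc n. \<alpha> j) = 1 \<Longrightarrow>
    combination (Suc n) \<alpha> x \<in> X"
proof (induction n arbitrary: x \<alpha>)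
  case 0
  then show ?case
    by (simp add: combination_def)
next
  case (Suc k)
  have IH: "combination (Suc k) \<beta> z \<in> X"
    if "\<forall>j<Suc k. z j \<in> X" "\<forall>j<Suc k. \<beta> j \<in> \<O>" "(\<Sum>j<Suc k. \<beta> j) = 1" for z \<beta>
    using that by (intro Suc.IH) auto
  show ?case
  proof (cases "1 - \<alpha> (Suc k) \<in> \<mm>")
    case False
    show ?thesis
    proof (rule convex2_combination_Suc[OF X])
      show "combination (Suc k) \<beta> x \<in> X" if "\<forall>j<Suc k. \<beta> j \<in> \<O>" "(\<Sum>j<Suc k. \<beta> j) = 1" for \<beta>
        using IH that Suc.prems(1) by simp
    qed (use Suc.prems False in auto)
  next
    case True
    define \<gamma> where "\<gamma> = \<alpha> (Suc k) / l"
    define y where "y = (\<lambda>i. l * x (Suc k) i + (1 - l) * x k i)"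
    define \<alpha>' where "\<alpha>' = \<alpha>(k := \<alpha> k - \<gamma> * (1 - l), Suc k := \<gamma>)"
    have "\<gamma> * l = \<alpha> (Suc k)"
      using l(2) unfolding \<gamma>_def by auto
    have \<gamma>: "\<gamma> \<in> \<O>" "1 - \<gamma> \<notin> \<mm>"
      using shifted_weight_unit[OF l] Suc.prems True unfolding \<gamma>_def by auto
    have "y \<in> X"
      using X Suc.prems(1) l(1) val_ring_diff[OF one_in_val_ring l(1)]
      unfolding convex2_val_def y_def by simp
    have "combination (Suc (Suc k)) \<alpha>' (x(Suc k := y)) \<in> X"
    proof (rule convex2_combination_Suc[OF X])
      show "combination (Suc k) \<beta> (x(Suc k := y)) \<in> X"
        if "\<forall>j<Suc k. \<beta> j \<in> \<O>" "(\<Sum>j<Suc k. \<beta> j) = 1" for \<beta>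
        using IH that Suc.prems(1) by simp
      show "\<forall>j<Suc (Suc k). \<alpha>' j \<in> \<O>"
        using Suc.prems(1) \<gamma>(1) val_ring_diff val_ring_mult val_ring_diff[OF one_in_val_ring l(1)]
        unfolding \<alpha>'_def by simp
      show "(\<Sum>j<Suc (Suc k). \<alpha>' j) = 1"
        unfolding \<alpha>'_def sum_shift_weight[where \<alpha> = \<alpha>, OF \<open>\<gamma> * l = \<alpha> (Suc k)\<close>]
        by (rule Suc.prems(2))
    qed (use \<open>y \<in> X\<close> \<gamma>(2) in \<open>simp_all add: \<alpha>'_def\<close>)
    then show ?thesis
      using combination_shift_weight[where \<alpha> = \<alpha> and x = x, OF \<open>\<gamma> * l = \<alpha> (Suc k)\<close>]
      unfolding \<alpha>'_def y_def by simp
  qed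
qed

lemma convex_if_convex2:
  assumes "l \<in> \<O>" "l \<notin> \<mm>" "1 - l \<notin> \<mm>" and "convex2_val \<nu> X"
  shows "convex_val \<nu> X"
  unfolding convex_val_def
proof (intro allI impI)
  fix n :: nat and x \<alpha> assume "1 \<le> n" and "\<forall>j<n. x j \<in> X \<and> \<alpha> j \<in> \<O>" "(\<Sum>j<n. \<alpha> j) = 1"
  moreover obtain m where "n = Suc m"
    using \<open>1 \<le> n\<close> by (cases n) auto
  ultimately show "(\<lambda>i. \<Sum>j<n. \<alpha> j * x j i) \<in> X"
    using convex2_combination[OF assms(4,1-3)] unfolding combination_def by simp
qed

definition residue_axes :: "(nat \<Rightarrow> 'a) set" where
  "residue_axes = {x \<in> Kpow 2. x 0 \<in> \<O> \<and> x 1 \<in> \<O> \<and> (x 0 \<in> \<mm> \<or> x 1 \<in> \<mm>)}"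

lemma residue_axes_subset_Kpow: "residue_axes \<subseteq> Kpow 2"
  unfolding residue_axes_def by blast

lemma residue_axes_combination:
  assumes "a \<in> \<mm>" "b \<in> \<O>" "b \<notin> \<mm>" "x \<in> residue_axes" "y \<in> residue_axes"
  shows "(\<lambda>i. a * x i + b * y i) \<in> residue_axes"
proof -
  have coord: "a * x i + b * y i \<in> \<O> \<and> (a * x i + b * y i \<in> \<mm> \<longleftrightarrow> y i \<in> \<mm>)"
    if "x i \<in> \<O>" "y i \<in> \<O>" for i
  proof -
    have "a * x i \<in> \<mm>"
      using val_max_ideal_mult[OF that(1) assms(1)] by (simp add: mult.commute)
    moreover have "b * y i \<in> \<O>"
      using val_ring_mult[OF assms(2) that(2)] .
    ultimately show ?thesis
      using val_max_ideal_add_iff val_max_ideal_mult_iff[OF assms(2) that(2)] assms(3)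
        val_ring_add val_max_ideal_subset by blast
  qed
  have "(\<lambda>i. a * x i + b * y i) \<in> Kpow 2"
    using assms(4,5) unfolding residue_axes_def Kpow_def by auto
  then show ?thesis
    using coord[of 0] coord[of 1] assms(4,5) unfolding residue_axes_def by auto
qed

lemma convex2_residue_axes:
  assumes binary: "\<forall>a\<in>\<O>. a \<in> \<mm> \<or> 1 - a \<in> \<mm>"
  shows "convex2_val \<nu> residue_axes"
  unfolding convex2_val_def
proof (intro ballI impI)
  fix x y a b assume "x \<in> residue_axes" "y \<in> residue_axes" "a \<in> \<O>" "b \<in> \<O>" "a + b = 1"
  have "a \<in> \<mm> \<and> b \<notin> \<mm> \<or> b \<in> \<mm> \<and> a \<notin> \<mm>"
  proof (cases "a \<in> \<mm>")
    case True
    then show ?thesis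
      using val_max_ideal_add[of a b] \<open>a + b = 1\<close> by auto
  next
    case False
    then have "b \<in> \<mm>"
      using binary \<open>a \<in> \<O>\<close> \<open>a + b = 1\<close> by (metis add_diff_cancel_left')
    with False show ?thesis
      by blast
  qed
  then show "(\<lambda>i. a * x i + b * y i) \<in> residue_axes"
    using residue_axes_combination[of a b x y] residue_axes_combination[of b a y x]
      \<open>x \<in> residue_axes\<close> \<open>y \<in> residue_axes\<close> \<open>a \<in> \<O>\<close> \<open>b \<in> \<O>\<close> by (auto simp: add.commute)
qed

lemma not_convex_residue_axes: "\<not> convex_val \<nu> residue_axes"
proof
  assume "convex_val \<nu> residue_axes"
  define e where "e k = (\<lambda>i::nat. if i = k then 1 else 0 :: 'a)" for k :: nat
  define x where "x j = (if j = 0 then e 0 else if j = 1 then e 1 else (\<lambda>i. 0))" for j :: nat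
  define \<alpha> where "\<alpha> j = (if j = 2 then -1 else 1 :: 'a)" for j :: nat
  have "\<forall>j<3. x j \<in> residue_axes \<and> \<alpha> j \<in> \<O>"
    unfolding x_def \<alpha>_def e_def residue_axes_def Kpow_def
    using val_ring_uminus[OF one_in_val_ring] by auto
  moreover have "(\<Sum>j<3. \<alpha> j) = 1"
    unfolding \<alpha>_def by (simp add: numeral_3_eq_3)
  ultimately have "(\<lambda>i. \<Sum>j<3. \<alpha> j * x j i) \<in> residue_axes"
    using \<open>convex_val \<nu> residue_axes\<close> unfolding convex_val_def by auto
  moreover have "(\<Sum>j<3. \<alpha> j * x j 0) = 1" "(\<Sum>j<3. \<alpha> j * x j 1) = 1"
    unfolding x_def \<alpha>_def e_def by (simp_all add: numeral_3_eq_3)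
  ultimately show False
    unfolding residue_axes_def by auto
qed

end

theorem proposition2p6:
  fixes \<nu> :: "'a::field \<Rightarrow> 'g::linordered_ab_group_add"
  assumes "valuation \<nu>"
  shows "(\<forall>d::nat. d \<ge> 1 \<longrightarrow> (\<forall>X. X \<subseteq> Kpow d \<longrightarrow> convex2_val \<nu> X \<longrightarrow> convex_val \<nu> X))
         \<longleftrightarrow> \<not> (residue_field \<nu> \<simeq> residue_ring 2)"
proof -
  interpret valued_field \<nu>
    using assms by unfold_locales
  show ?thesis
  proof
    assume all_convex: "\<forall>d::nat. d \<ge> 1 \<longrightarrow> (\<forall>X. X \<subseteq> Kpow d \<longrightarrow> convex2_val \<nu> X \<longrightarrow> convex_val \<nu> X)"
    have "\<forall>X. X \<subseteq> Kpow 2 \<longrightarrow> convex2_val \<nu> X \<longrightarrow> convex_val \<nu> X"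
      using all_convex one_le_numeral by blast
    then have "\<not> convex2_val \<nu> residue_axes"
      using residue_axes_subset_Kpow not_convex_residue_axes by blast
    then show "\<not> (residue_field \<nu> \<simeq> residue_ring 2)"
      using convex2_residue_axes residue_field_iso_Z2_iff by blast
  next
    assume "\<not> (residue_field \<nu> \<simeq> residue_ring 2)"
    then obtain l where "l \<in> \<O>" "l \<notin> \<mm>" "1 - l \<notin> \<mm>"
      using residue_field_iso_Z2_iff by blast
    then show "\<forall>d::nat. d \<ge> 1 \<longrightarrow> (\<forall>X. X \<subseteq> Kpow d \<longrightarrow> convex2_val \<nu> X \<longrightarrow> convex_val \<nu> X)"
      using convex_if_convex2 by blast
  qed
qed

end
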